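(* Let $n\geq1$. For all $m\in\mathbb N$, $\overline{(m,m)}\in\mathrm{span}_{\mathbb C}\{\overline{(1,1)},\overline{(2,2)},\ldots,\overline{(n,n)}\}$.
   Context: $\Lambda_{2,n}=\{\alpha\in\mathbb N^2:1\leq\alpha_1+\alpha_2\leq n\}$, $\lambda_{2,n}=|\Lambda_{2,n}|$, and for $v\in\mathbb N^2$, $\bar v=\big(\binom{v_1}{\alpha_1}\binom{v_2}{\alpha_2}\big)_{\alpha\in\Lambda_{2,n}}\in\mathbb C^{\lambda_{2,n}}$. *)

theory Defs
  imports "HOL-Analysis.Analysis" "HOL-Library.Function_Algebras"
begin

definition Lambda2 :: "nat \<Rightarrow> (nat \<times> nat) set" where
  "Lambda2 n = {\<alpha>. 1 \<le> fst \<alpha> + snd \<alpha> \<and> fst \<alpha> + snd \<alpha> \<le> n}"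

text \<open>The vector vbar in C^{Lambda_{2,n}}, represented as a function on N^2
  that is zero outside Lambda_{2,n}.\<close>
definition vbar :: "nat \<Rightarrow> nat \<times> nat \<Rightarrow> (nat \<times> nat \<Rightarrow> complex)" where
  "vbar n v = (\<lambda>\<alpha>. if \<alpha> \<in> Lambda2 n
      then of_nat ((fst v choose fst \<alpha>) * (snd v choose snd \<alpha>)) else 0)"

definition cscale :: "complex \<Rightarrow> (nat \<times> nat \<Rightarrow> complex) \<Rightarrow> (nat \<times> nat \<Rightarrow> complex)" where
  "cscale c f = (\<lambda>x. c * f x)"

end

theory Submission
  imports Defs "HOL-Computational_Algebra.Polynomial"
begin

text \<open>The coordinate of \<open>vbar n (m, m)\<close> at \<open>(a, b)\<close> is \<open>(m choose a) * (m choose b)\<close>, a polynomial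
  in \<open>m\<close> of degree \<open>a + b \<le> n\<close> that vanishes at \<open>m = 0\<close> because \<open>a + b \<ge> 1\<close>. Lagrange
  interpolation at the nodes \<open>0, \<dots>, n\<close> writes its value at \<open>m\<close> as \<open>\<Sum>k\<le>n. L\<^sub>k(m)\<close> times its
  value at \<open>k\<close>. The weights \<open>L\<^sub>k(m)\<close> do not depend on \<open>(a, b)\<close>, and the term \<open>k = 0\<close> vanishes,
  so \<open>vbar n (m, m) = (\<Sum>k=1..n. L\<^sub>k(m) \<cdot> vbar n (k, k))\<close>.\<close>

definition gbinomial_poly :: "nat \<Rightarrow> 'a::field_char_0 poly" where
  "gbinomial_poly k = smult (inverse (fact k)) (\<Prod>i<k. [:- of_nat i, 1:])"

lemma poly_gbinomial_poly: "poly (gbinomial_poly k) z = z gchoose k"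
  by (simp add: gbinomial_poly_def poly_prod gbinomial_prod_rev atLeast0LessThan field_simps)

lemma degree_gbinomial_poly: "degree (gbinomial_poly k) \<le> k"
proof -
  have "degree (\<Prod>i<k. [:- of_nat i, 1:] :: 'a poly) \<le> (\<Sum>i<k. degree ([:- of_nat i, 1:] :: 'a poly))"
    using degree_prod_sum_le[of "{..<k}" "\<lambda>i. [:- of_nat i, 1:] :: 'a poly"] by (simp add: o_def)
  then show ?thesis
    unfolding gbinomial_poly_def by simp
qed

definition lagrange_basis :: "'a::field set \<Rightarrow> 'a \<Rightarrow> 'a poly" where
  "lagrange_basis S c = (\<Prod>d\<in>S - {c}. smult (inverse (c - d)) [:- d, 1:])"

lemma poly_lagrange_basis: "poly (lagrange_basis S c) x = (\<Prod>d\<in>S - {c}. (x - d) / (c - d))"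
  by (simp add: lagrange_basis_def poly_prod divide_inverse algebra_simps)

lemma poly_lagrange_basis_node:
  assumes "finite S" "x \<in> S"
  shows "poly (lagrange_basis S c) x = (if x = c then 1 else 0)"
  using assms by (auto simp: poly_lagrange_basis prod_zero_iff intro!: bexI[of _ x])

lemma degree_lagrange_basis:
  assumes "finite S" "c \<in> S"
  shows "degree (lagrange_basis S c) < card S"
proof -
  have "degree (lagrange_basis S c) \<le> sum (degree \<circ> (\<lambda>d. smult (inverse (c - d)) [:- d, 1:])) (S - {c})"
    unfolding lagrange_basis_def using assms(1) by (intro degree_prod_sum_le) simp
  also have "\<dots> \<le> (\<Sum>d\<in>S - {c}. 1)"
    by (intro sum_mono) simp
  also have "\<dots> < card S"
    using assms card_gt_0_iff[of S] by auto
  finally show ?thesis .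
qed

lemma lagrange_interpolation:
  fixes p :: "'a::field poly"
  assumes "finite S" "degree p < card S"
  shows "p = (\<Sum>c\<in>S. smult (poly p c) (lagrange_basis S c))"
proof (rule poly_eqI_degree[of S])
  fix x assume "x \<in> S"
  then show "poly p x = poly (\<Sum>c\<in>S. smult (poly p c) (lagrange_basis S c)) x"
    using assms(1) by (simp add: poly_sum poly_lagrange_basis_node if_distrib cong: if_cong)
next
  have "S \<noteq> {}"
    using assms(2) by auto
  have "degree (lagrange_basis S c) \<le> card S - 1" if "c \<in> S" for c
    using degree_lagrange_basis[OF assms(1) that] by linarith
  then have "degree (\<Sum>c\<in>S. smult (poly p c) (lagrange_basis S c)) \<le> card S - 1"
    using assms(1) by (intro degree_sum_le) (auto intro: order.trans[OF degree_smult_le])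
  then show "degree (\<Sum>c\<in>S. smult (poly p c) (lagrange_basis S c)) < card S"
    using \<open>S \<noteq> {}\<close> assms(1) card_gt_0_iff[of S] by linarith
qed (use assms in auto)

lemma interpolation_at_positive_naturals:
  fixes p :: "'a::field_char_0 poly"
  assumes "degree p \<le> n" "poly p 0 = 0"
  shows "poly p z =
    (\<Sum>k\<in>{1..n}. poly p (of_nat k) * poly (lagrange_basis (of_nat ` {0..n}) (of_nat k)) z)"
proof -
  let ?S = "of_nat ` {0..n} :: 'a set"
  have inj: "inj_on (of_nat :: nat \<Rightarrow> 'a) {0..n}"
    by (auto simp: inj_on_def)
  then have "degree p < card ?S"
    using assms(1) by (simp add: card_image)
  then have "poly p z = (\<Sum>c\<in>?S. poly p c * poly (lagrange_basis ?S c) z)"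
    by (subst lagrange_interpolation[of ?S p]) (simp_all add: poly_sum)
  also have "\<dots> = (\<Sum>k\<in>{0..n}. poly p (of_nat k) * poly (lagrange_basis ?S (of_nat k)) z)"
    using inj by (simp add: sum.reindex)
  also have "\<dots> = (\<Sum>k\<in>{1..n}. poly p (of_nat k) * poly (lagrange_basis ?S (of_nat k)) z)"
    using assms(2) by (simp add: sum.atLeast_Suc_atMost)
  finally show ?thesis .
qed

lemma vbar_diagonal_polynomial:
  assumes "\<alpha> \<in> Lambda2 n"
  obtains P :: "complex poly"
  where "degree P \<le> n" "poly P 0 = 0" "\<And>j. vbar n (j, j) \<alpha> = poly P (of_nat j)"
proof -
  obtain a b where \<alpha>: "\<alpha> = (a, b)" "1 \<le> a + b" "a + b \<le> n"
    using assms by (cases \<alpha>) (auto simp: Lambda2_def)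
  let ?P = "gbinomial_poly a * gbinomial_poly b :: complex poly"
  have "degree ?P \<le> a + b"
    by (rule order.trans[OF degree_mult_le add_mono[OF degree_gbinomial_poly degree_gbinomial_poly]])
  then have "degree ?P \<le> n"
    using \<alpha> by linarith
  moreover have "poly ?P 0 = 0"
    using \<alpha> by (auto simp: poly_gbinomial_poly gbinomial_0_left)
  moreover have "vbar n (j, j) \<alpha> = poly ?P (of_nat j)" for j
    using assms by (simp add: vbar_def \<alpha> poly_gbinomial_poly binomial_gbinomial)
  ultimately show thesis
    by (rule that)
qed

lemma sum_fun_apply: "(\<Sum>i\<in>S. f i) x = (\<Sum>i\<in>S. f i x)"
  by (induct S rule: infinite_finite_induct) auto

lemma module_cscale: "module cscale"
  by unfold_locales (auto simp: cscale_def fun_eq_iff algebra_simps)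

theorem lemma2p11:
  fixes n :: nat
  assumes "n \<ge> 1"
  shows "\<forall>m::nat. vbar n (m, m) \<in> module.span cscale ((\<lambda>k. vbar n (k, k)) ` {1..n})"
proof
  fix m :: nat
  interpret module cscale
    by (rule module_cscale)
  let ?L = "\<lambda>k. lagrange_basis (of_nat ` {0..n}) (of_nat k :: complex)"
  have expansion: "vbar n (m, m) = (\<Sum>k\<in>{1..n}. cscale (poly (?L k) (of_nat m)) (vbar n (k, k)))"
  proof
    fix \<alpha>
    show "vbar n (m, m) \<alpha> = (\<Sum>k\<in>{1..n}. cscale (poly (?L k) (of_nat m)) (vbar n (k, k))) \<alpha>"
    proof (cases "\<alpha> \<in> Lambda2 n")
      case True
      obtain P where "degree P \<le> n" "poly P 0 = 0" "\<And>j. vbar n (j, j) \<alpha> = poly P (of_nat j)"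
        using vbar_diagonal_polynomial[OF True] by blast
      then have "vbar n (m, m) \<alpha> = (\<Sum>k\<in>{1..n}. vbar n (k, k) \<alpha> * poly (?L k) (of_nat m))"
        using interpolation_at_positive_naturals[of P n "of_nat m"] by simp
      then show ?thesis
        by (simp add: sum_fun_apply cscale_def mult.commute)
    qed (simp add: vbar_def sum_fun_apply cscale_def)
  qed
  show "vbar n (m, m) \<in> span ((\<lambda>k. vbar n (k, k)) ` {1..n})"
    unfolding expansion by (intro span_sum span_scale span_base) auto
qed

end
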